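(* Let $r$ be the stochastic relative degree of system $(\Sigma_0)$ at $\bar x$. Then, for all $x$ in a neighbourhood of $\bar x$, $$\mathcal S^k_{f,l}h(x)=L^k_{f_S}h(x)\qquad\text{for all }k\in\{0,\dots,r-1\},$$ where $f_S(x)=f(x)-\frac12\frac{\partial l}{\partial x}(x)l(x)$.
   Context: System $(\Sigma_0)$: $dx_t=(f(x_t)+g(x_t)u)dt+l(x_t)d\mathcal W_t$, $y_t=h(x_t)$ (Itô sense), equivalently $\dot x_t=f(x_t)+g(x_t)u+l(x_t)\xi_t$ with $\xi_t$ white noise, $x\in\mathbb R^n$, $f,g,l:\mathbb R^n\to\mathbb R^n$, $h:\mathbb R^n\to\mathbb R$ smooth. Notation: $L_fh=\frac{\partial h}{\partial x}f$, $L^k_f h=L_fL_f^{k-1}h$, $L^0_fh=h$; $H_{l,l}h=l^\top\frac{\partial^2h}{\partial x^2}l$; $\mathcal S_{f,l}h(\xi,x)=L_fh(x)+L_lh(x)\xi+\frac12H_{l,l}h(x)$, iterated as $\mathcal S^k_{f,l}h=\mathcal S_{f,l}\mathcal S^{k-1}_{f,l}h$ whenever $\mathcal S^{k-1}_{f,l}h$ is independent of $\xi$, $\mathcal S^0_{f,l}h=h$. Stochastic relative degree $r$ at $\bar x$ for $(\Sigma_0)$: (ND) $L_l\mathcal S^k_{f,l}h(x)=0$ for all $x$ near $\bar x$ and $k\in\{0,\dots,r-2\}$; (CD) $L_g\mathcal S^k_{f,l}h(x)=0$ for all $x$ near $\bar x$ and $k\in\{0,\dots,r-2\}$; (RD)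 $L_g\mathcal S^{r-1}_{f,l}h(\bar x)\neq0$. *)

theory Defs
  imports "HOL-Analysis.Analysis"
begin

definition dirD :: "('a::real_normed_vector \<Rightarrow> 'b::real_normed_vector) \<Rightarrow> 'a \<Rightarrow> 'a \<Rightarrow> 'b" where
  "dirD F v x = frechet_derivative F (at x) v"

fun iter_dirD :: "'a::real_normed_vector list \<Rightarrow> ('a \<Rightarrow> 'b::real_normed_vector) \<Rightarrow> 'a \<Rightarrow> 'b" where
  "iter_dirD [] F = F"
| "iter_dirD (v # vs) F = dirD (iter_dirD vs F) v"

definition smooth :: "('a::real_normed_vector \<Rightarrow> 'b::real_normed_vector) \<Rightarrow> bool" where
  "smooth F \<longleftrightarrow> (\<forall>vs x. iter_dirD vs F differentiable (at x))"

definition Lie :: "('a::real_normed_vector \<Rightarrow> 'a) \<Rightarrow> ('a \<Rightarrow> real) \<Rightarrow> 'a \<Rightarrow> real" where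
  "Lie f h x = frechet_derivative h (at x) (f x)"

definition Lie_iter :: "nat \<Rightarrow> ('a::real_normed_vector \<Rightarrow> 'a) \<Rightarrow> ('a \<Rightarrow> real) \<Rightarrow> 'a \<Rightarrow> real" where
  "Lie_iter k f h = (Lie f ^^ k) h"

text \<open>H_{l,l} h (x) = l(x)^T (d^2 h/dx^2)(x) l(x).\<close>
definition Hess :: "('a::real_normed_vector \<Rightarrow> 'a) \<Rightarrow> ('a \<Rightarrow> real) \<Rightarrow> 'a \<Rightarrow> real" where
  "Hess l h x = frechet_derivative (\<lambda>y. frechet_derivative h (at y) (l x)) (at x) (l x)"

definition Sop :: "('a::real_normed_vector \<Rightarrow> 'a) \<Rightarrow> ('a \<Rightarrow> 'a) \<Rightarrow> ('a \<Rightarrow> real) \<Rightarrow> real \<Rightarrow> 'a \<Rightarrow> real" where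
  "Sop f l h \<xi> x = Lie f h x + Lie l h x * \<xi> + (1/2) * Hess l h x"

text \<open>The paper only defines S^k when
  S^{k-1} is independent of xi; in that case evaluating S^{k-1} at xi = 0 gives that
  xi-free function, so this agrees with the paper wherever the paper's iterate is defined.\<close>
fun Siter :: "nat \<Rightarrow> ('a::real_normed_vector \<Rightarrow> 'a) \<Rightarrow> ('a \<Rightarrow> 'a) \<Rightarrow> ('a \<Rightarrow> real) \<Rightarrow> real \<Rightarrow> 'a \<Rightarrow> real" where
  "Siter 0 f l h = (\<lambda>\<xi> x. h x)"
| "Siter (Suc k) f l h = Sop f l (\<lambda>x. Siter k f l h 0 x)"

definition stoch_rel_deg ::
  "('a::real_normed_vector \<Rightarrow> 'a) \<Rightarrow> ('a \<Rightarrow> 'a) \<Rightarrow> ('a \<Rightarrow> 'a) \<Rightarrow> ('a \<Rightarrow> real) \<Rightarrow> nat \<Rightarrow> 'a \<Rightarrow> bool" where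
  "stoch_rel_deg f g l h r xbar \<longleftrightarrow> r \<ge> 1
     \<and> (\<forall>\<^sub>F x in nhds xbar. \<forall>k. k + 2 \<le> r \<longrightarrow> Lie l (\<lambda>y. Siter k f l h 0 y) x = 0)
     \<and> (\<forall>\<^sub>F x in nhds xbar. \<forall>k. k + 2 \<le> r \<longrightarrow> Lie g (\<lambda>y. Siter k f l h 0 y) x = 0)
     \<and> Lie g (\<lambda>y. Siter (r - 1) f l h 0 y) xbar \<noteq> 0"

end

theory Submission
  imports Defs
begin

text \<open>If \<open>L_l \<phi>\<close> vanishes on an open set, differentiating
  \<open>L_l \<phi> = \<Sum>_i (l \<bullet> e_i) \<partial>_i \<phi>\<close> once more along \<open>l\<close> gives
  \<open>H_{l,l} \<phi> + L_{(\<partial>l/\<partial>x) l} \<phi> = 0\<close> there, hence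
  \<open>S_{f,l} \<phi> = L_f \<phi> + 1/2 H_{l,l} \<phi> = L_{f_S} \<phi>\<close>, independently of \<open>\<xi>\<close>.
  Condition (ND) supplies this vanishing for \<open>\<phi> = S^k h\<close>, \<open>k \<le> r - 2\<close>, on one common
  neighbourhood of \<open>xbar\<close>, so induction on \<open>k\<close> gives the claim there; smoothness of the
  iterates only serves to keep all derivatives defined.\<close>

definition stratonovich_drift :: "('a::real_normed_vector \<Rightarrow> 'a) \<Rightarrow> ('a \<Rightarrow> 'a) \<Rightarrow> 'a \<Rightarrow> 'a" where
  "stratonovich_drift f l y = f y - (1/2) *\<^sub>R frechet_derivative l (at y) (l y)"

lemma smooth_differentiable: "smooth F \<Longrightarrow> F differentiable (at x)"
  unfolding smooth_def by (metis iter_dirD.simps(1))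

lemma iter_dirD_dirD: "iter_dirD vs (dirD F v) = iter_dirD (vs @ [v]) F"
  by (induction vs) auto

lemma smooth_dirD: "smooth F \<Longrightarrow> smooth (dirD F v)"
  unfolding smooth_def by (simp add: iter_dirD_dirD)

lemma smooth_if_dirD_closed:
  assumes "\<And>F x. F \<in> K \<Longrightarrow> F differentiable (at x)"
    and "\<And>F v. F \<in> K \<Longrightarrow> dirD F v \<in> K"
    and "F \<in> K"
  shows "smooth F"
proof -
  have "iter_dirD vs F \<in> K" for vs
    by (induction vs) (auto simp: assms)
  then show ?thesis unfolding smooth_def using assms(1) by blast
qed

lemma smooth_const: "smooth (\<lambda>x. c)"
proof -
  have "iter_dirD vs (\<lambda>x. c) = (\<lambda>x. if vs = [] then c else 0)" for vs :: "'a list"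
    by (induction vs) (auto simp: dirD_def)
  then show ?thesis unfolding smooth_def by simp
qed

lemma dirD_add:
  assumes "\<And>x. F differentiable (at x)" "\<And>x. G differentiable (at x)"
  shows "dirD (\<lambda>x. F x + G x) v = (\<lambda>x. dirD F v x + dirD G v x)"
proof
  fix x
  have "((\<lambda>x. F x + G x) has_derivative
      (\<lambda>h. frechet_derivative F (at x) h + frechet_derivative G (at x) h)) (at x)"
    using assms by (intro has_derivative_add) (auto simp: frechet_derivative_works[symmetric])
  from frechet_derivative_at[OF this] show "dirD (\<lambda>x. F x + G x) v x = dirD F v x + dirD G v x"
    unfolding dirD_def by metis
qed

lemma dirD_mult:
  fixes F G :: "'a::real_normed_vector \<Rightarrow> real"
  assumes "\<And>x. F differentiable (at x)" "\<And>x. G differentiable (at x)"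
  shows "dirD (\<lambda>x. F x * G x) v = (\<lambda>x. F x * dirD G v x + dirD F v x * G x)"
proof
  fix x
  have "(F has_derivative frechet_derivative F (at x)) (at x)"
    and "(G has_derivative frechet_derivative G (at x)) (at x)"
    using assms frechet_derivative_works by blast+
  from has_derivative_mult[OF this] have "((\<lambda>x. F x * G x) has_derivative
      (\<lambda>h. F x * frechet_derivative G (at x) h + frechet_derivative F (at x) h * G x)) (at x)"
    by simp
  from frechet_derivative_at[OF this]
  show "dirD (\<lambda>x. F x * G x) v x = F x * dirD G v x + dirD F v x * G x"
    unfolding dirD_def by metis
qed

lemma dirD_inner_left:
  assumes "\<And>x. G differentiable (at x)"
  shows "dirD (\<lambda>x. G x \<bullet> i) v = (\<lambda>x. dirD G v x \<bullet> i)"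
proof
  fix x
  have "((\<lambda>x. G x \<bullet> i) has_derivative (\<lambda>h. frechet_derivative G (at x) h \<bullet> i)) (at x)"
    using assms by (intro has_derivative_inner_left) (auto simp: frechet_derivative_works[symmetric])
  from frechet_derivative_at[OF this] show "dirD (\<lambda>x. G x \<bullet> i) v x = dirD G v x \<bullet> i"
    unfolding dirD_def by metis
qed

inductive_set smooth_ring_closure :: "('a::real_normed_vector \<Rightarrow> real) set" where
  "smooth F \<Longrightarrow> F \<in> smooth_ring_closure"
| "F \<in> smooth_ring_closure \<Longrightarrow> G \<in> smooth_ring_closure \<Longrightarrow> (\<lambda>x. F x + G x) \<in> smooth_ring_closure"
| "F \<in> smooth_ring_closure \<Longrightarrow> G \<in> smooth_ring_closure \<Longrightarrow> (\<lambda>x. F x * G x) \<in> smooth_ring_closure"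

text \<open>The Leibniz rule only shows that derivatives of products are sums of products, so
  smoothness of products is proved for the whole closure under \<open>+\<close> and \<open>*\<close> at once.\<close>

lemma smooth_ring_closure_smooth:
  assumes "F \<in> smooth_ring_closure"
  shows "smooth F"
proof -
  have diff: "G differentiable (at x)" if "G \<in> smooth_ring_closure" for G and x :: 'a
    using that by induction (auto simp: smooth_differentiable)
  have "dirD G v \<in> smooth_ring_closure" if "G \<in> smooth_ring_closure" for G and v :: 'a
    using that
  proof induction
    case (1 F)
    then show ?case by (intro smooth_ring_closure.intros(1) smooth_dirD)
  next
    case (2 F G)
    then show ?case by (simp add: dirD_add diff smooth_ring_closure.intros(2))
  next
    case (3 F G)
    then show ?case by (simp add: dirD_mult diff smooth_ring_closure.intros(2,3))
  qed
  from diff this assms show ?thesis by (rule smooth_if_dirD_closed)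
qed

lemma smooth_add:
  fixes F G :: "'a::real_normed_vector \<Rightarrow> real"
  shows "smooth F \<Longrightarrow> smooth G \<Longrightarrow> smooth (\<lambda>x. F x + G x)"
  by (blast intro: smooth_ring_closure_smooth smooth_ring_closure.intros)

lemma smooth_mult:
  fixes F G :: "'a::real_normed_vector \<Rightarrow> real"
  shows "smooth F \<Longrightarrow> smooth G \<Longrightarrow> smooth (\<lambda>x. F x * G x)"
  by (blast intro: smooth_ring_closure_smooth smooth_ring_closure.intros)

lemma smooth_sum:
  fixes F :: "'i \<Rightarrow> 'a::real_normed_vector \<Rightarrow> real"
  shows "finite A \<Longrightarrow> (\<And>i. i \<in> A \<Longrightarrow> smooth (F i)) \<Longrightarrow> smooth (\<lambda>x. \<Sum>i\<in>A. F i x)"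
  by (induction A rule: finite_induct) (auto simp: smooth_const smooth_add)

lemma smooth_inner_left:
  assumes "smooth (G :: 'a::real_normed_vector \<Rightarrow> 'b::real_inner)"
  shows "smooth (\<lambda>x. G x \<bullet> i)"
proof -
  have "iter_dirD vs (\<lambda>x. G x \<bullet> i) = (\<lambda>x. iter_dirD vs G x \<bullet> i)" for vs
  proof (induction vs)
    case (Cons v vs)
    have "\<And>x. iter_dirD vs G differentiable (at x)" using assms unfolding smooth_def by blast
    then show ?case using Cons by (simp add: dirD_inner_left)
  qed simp
  then show ?thesis using assms unfolding smooth_def by simp
qed

lemma frechet_derivative_Basis_expansion:
  fixes \<phi> :: "'a::euclidean_space \<Rightarrow> real"
  assumes "\<phi> differentiable (at x)"
  shows "frechet_derivative \<phi> (at x) w = (\<Sum>i\<in>Basis. (w \<bullet> i) * dirD \<phi> i x)"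
proof -
  have "linear (frechet_derivative \<phi> (at x))"
    using frechet_derivative_works[THEN iffD1, OF assms] by (rule has_derivative_linear)
  then have "frechet_derivative \<phi> (at x) (\<Sum>i\<in>Basis. (w \<bullet> i) *\<^sub>R i)
      = (\<Sum>i\<in>Basis. (w \<bullet> i) * dirD \<phi> i x)"
    by (simp add: linear_sum linear_scale dirD_def)
  then show ?thesis by (simp add: euclidean_representation)
qed

lemma Lie_Basis_expansion:
  fixes \<phi> :: "'a::euclidean_space \<Rightarrow> real"
  assumes "\<phi> differentiable (at x)"
  shows "Lie v \<phi> x = (\<Sum>i\<in>Basis. (v x \<bullet> i) * dirD \<phi> i x)"
  unfolding Lie_def by (rule frechet_derivative_Basis_expansion[OF assms])

lemma Hess_Basis_expansion:
  fixes \<phi> :: "'a::euclidean_space \<Rightarrow> real"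
  assumes "\<And>y. \<phi> differentiable (at y)" "\<And>i. dirD \<phi> i differentiable (at x)"
  shows "Hess l \<phi> x = (\<Sum>i\<in>Basis. (l x \<bullet> i) * Lie l (dirD \<phi> i) x)"
proof -
  have eq: "(\<lambda>y. frechet_derivative \<phi> (at y) (l x)) = (\<lambda>y. \<Sum>i\<in>Basis. (l x \<bullet> i) * dirD \<phi> i y)"
    by (rule ext, rule frechet_derivative_Basis_expansion[OF assms(1)])
  have hd: "((\<lambda>y. \<Sum>i\<in>Basis. (l x \<bullet> i) * dirD \<phi> i y) has_derivative
      (\<lambda>h. \<Sum>i\<in>Basis. (l x \<bullet> i) * frechet_derivative (dirD \<phi> i) (at x) h)) (at x)"
    using assms(2) by (intro has_derivative_sum has_derivative_mult_right)
      (auto simp: frechet_derivative_works[symmetric])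
  show ?thesis
    unfolding Hess_def eq Lie_def frechet_derivative_at[OF hd, symmetric] by simp
qed

lemma smooth_Lie:
  fixes \<phi> :: "'a::euclidean_space \<Rightarrow> real"
  assumes "smooth \<phi>" "smooth v"
  shows "smooth (Lie v \<phi>)"
proof -
  have expansion: "Lie v \<phi> = (\<lambda>x. \<Sum>i\<in>Basis. (v x \<bullet> i) * dirD \<phi> i x)"
    using assms(1) by (auto simp: Lie_Basis_expansion smooth_differentiable)
  show ?thesis
    unfolding expansion using assms by (intro smooth_sum finite_Basis smooth_mult smooth_inner_left smooth_dirD)
qed

lemma smooth_Hess:
  fixes \<phi> :: "'a::euclidean_space \<Rightarrow> real"
  assumes "smooth \<phi>" "smooth l"
  shows "smooth (Hess l \<phi>)"
proof -
  have expansion: "Hess l \<phi> = (\<lambda>x. \<Sum>i\<in>Basis. (l x \<bullet> i) * Lie l (dirD \<phi> i) x)"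
    using assms(1) by (auto simp: Hess_Basis_expansion smooth_differentiable smooth_dirD)
  show ?thesis
    unfolding expansion using assms by (intro smooth_sum finite_Basis smooth_mult smooth_inner_left smooth_Lie smooth_dirD)
qed

lemma smooth_Siter:
  fixes f l :: "'a::euclidean_space \<Rightarrow> 'a"
  assumes "smooth f" "smooth l" "smooth h"
  shows "smooth (\<lambda>x. Siter k f l h 0 x)"
proof (induction k)
  case 0
  then show ?case using assms(3) by simp
next
  case (Suc k)
  define \<phi> where "\<phi> = (\<lambda>x. Siter k f l h 0 x)"
  have "smooth (\<lambda>x. Lie f \<phi> x + (1/2) * Hess l \<phi> x)"
    using Suc assms unfolding \<phi>_def[symmetric]
    by (intro smooth_add smooth_mult smooth_const smooth_Lie smooth_Hess)
  then show ?case by (simp add: Sop_def \<phi>_def)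
qed

lemma Lie_cong_open:
  assumes "\<phi> differentiable (at x)" "open U" "x \<in> U" "\<And>y. y \<in> U \<Longrightarrow> \<phi> y = \<psi> y"
  shows "Lie v \<phi> x = Lie v \<psi> x"
proof -
  have "(\<phi> has_derivative frechet_derivative \<phi> (at x)) (at x)"
    using frechet_derivative_works assms(1) by blast
  then have "(\<psi> has_derivative frechet_derivative \<phi> (at x)) (at x)"
    using assms(2-4) by (rule has_derivative_transform_within_open)
  from frechet_derivative_at[OF this] show ?thesis unfolding Lie_def by simp
qed

lemma Hess_add_Lie_eq_0_if_Lie_vanishes:
  fixes \<phi> :: "'a::euclidean_space \<Rightarrow> real" and l :: "'a \<Rightarrow> 'a"
  assumes "smooth \<phi>" "smooth l" "open U" "x \<in> U" "\<And>y. y \<in> U \<Longrightarrow> Lie l \<phi> y = 0"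
  shows "Hess l \<phi> x + Lie (\<lambda>y. frechet_derivative l (at y) (l y)) \<phi> x = 0"
proof -
  have d\<phi>: "\<And>y. \<phi> differentiable (at y)" and dd\<phi>: "\<And>i y. dirD \<phi> i differentiable (at y)"
    using assms(1) by (auto simp: smooth_differentiable smooth_dirD)
  have dl: "(l has_derivative frechet_derivative l (at x)) (at x)"
    using smooth_differentiable[OF assms(2)] frechet_derivative_works by blast
  \<comment> \<open>\<open>L'\<close> is the derivative of \<open>L_l \<phi>\<close> at \<open>x\<close> by the product rule; it is zero because
      \<open>L_l \<phi>\<close> vanishes near \<open>x\<close>, and \<open>L' (l x)\<close> is the left-hand side of the claim.\<close>
  define L' where "L' = (\<lambda>w. \<Sum>i\<in>Basis. (frechet_derivative l (at x) w \<bullet> i) * dirD \<phi> i x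
      + (l x \<bullet> i) * frechet_derivative (dirD \<phi> i) (at x) w)"
  have dL: "((\<lambda>y. \<Sum>i\<in>Basis. (l y \<bullet> i) * dirD \<phi> i y) has_derivative L') (at x)"
    unfolding L'_def
  proof (intro has_derivative_sum)
    fix i :: 'a
    have a: "((\<lambda>y. l y \<bullet> i) has_derivative (\<lambda>w. frechet_derivative l (at x) w \<bullet> i)) (at x)"
      by (intro has_derivative_inner_left dl)
    have b: "(dirD \<phi> i has_derivative frechet_derivative (dirD \<phi> i) (at x)) (at x)"
      using dd\<phi> frechet_derivative_works by blast
    from has_derivative_mult[OF a b] show "((\<lambda>y. (l y \<bullet> i) * dirD \<phi> i y) has_derivative (\<lambda>w.
        (frechet_derivative l (at x) w \<bullet> i) * dirD \<phi> i x
        + (l x \<bullet> i) * frechet_derivative (dirD \<phi> i) (at x) w)) (at x)"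
      by (simp add: add.commute)
  qed
  have "(\<Sum>i\<in>Basis. (l y \<bullet> i) * dirD \<phi> i y) = 0" if "y \<in> U" for y
    using assms(5)[OF that] by (simp only: Lie_Basis_expansion[OF d\<phi>])
  with dL assms(3,4) have "((\<lambda>y. 0::real) has_derivative L') (at x)"
    by (rule has_derivative_transform_within_open)
  then have "L' = (\<lambda>w. 0)" by (rule has_derivative_unique[OF _ has_derivative_const])
  moreover have "L' (l x) = Lie (\<lambda>y. frechet_derivative l (at y) (l y)) \<phi> x + Hess l \<phi> x"
    unfolding L'_def sum.distrib Lie_Basis_expansion[OF d\<phi>] Hess_Basis_expansion[OF d\<phi> dd\<phi>]
    by (simp add: Lie_def dirD_def)
  ultimately show ?thesis by simp
qed

lemma Sop_eq_Lie_stratonovich_drift: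
  fixes \<phi> :: "'a::euclidean_space \<Rightarrow> real" and l f :: "'a \<Rightarrow> 'a"
  assumes "smooth \<phi>" "smooth l" "open U" "x \<in> U" "\<And>y. y \<in> U \<Longrightarrow> Lie l \<phi> y = 0"
  shows "Sop f l \<phi> \<xi> x = Lie (stratonovich_drift f l) \<phi> x"
proof -
  have "linear (frechet_derivative \<phi> (at x))"
    using frechet_derivative_works[THEN iffD1, OF smooth_differentiable[OF assms(1)]]
    by (rule has_derivative_linear)
  then have "Lie (stratonovich_drift f l) \<phi> x
      = Lie f \<phi> x - (1/2) * Lie (\<lambda>y. frechet_derivative l (at y) (l y)) \<phi> x"
    unfolding Lie_def stratonovich_drift_def by (simp add: linear_diff linear_scale)
  moreover have "Sop f l \<phi> \<xi> x = Lie f \<phi> x + (1/2) * Hess l \<phi> x"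
    unfolding Sop_def using assms(5)[OF assms(4)] by simp
  ultimately show ?thesis
    using Hess_add_Lie_eq_0_if_Lie_vanishes[OF assms] by simp
qed

lemma Siter_eq_Lie_iter_stratonovich_drift:
  fixes f l :: "'a::euclidean_space \<Rightarrow> 'a"
  assumes "smooth f" "smooth l" "smooth h" "open U"
    and ND: "\<And>y k. y \<in> U \<Longrightarrow> k + 2 \<le> r \<Longrightarrow> Lie l (\<lambda>z. Siter k f l h 0 z) y = 0"
  shows "k \<le> r - 1 \<Longrightarrow> x \<in> U \<Longrightarrow> Siter k f l h \<xi> x = Lie_iter k (stratonovich_drift f l) h x"
proof (induction k arbitrary: x \<xi>)
  case 0
  then show ?case by (simp add: Lie_iter_def)
next
  case (Suc k)
  define \<phi> where "\<phi> = (\<lambda>x. Siter k f l h 0 x)"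
  have "smooth \<phi>" unfolding \<phi>_def using assms(1-3) by (rule smooth_Siter)
  have "Siter (Suc k) f l h \<xi> x = Sop f l \<phi> \<xi> x" by (simp add: \<phi>_def)
  also have "\<dots> = Lie (stratonovich_drift f l) \<phi> x"
  proof (rule Sop_eq_Lie_stratonovich_drift[OF \<open>smooth \<phi>\<close> assms(2,4) \<open>x \<in> U\<close>])
    show "Lie l \<phi> y = 0" if "y \<in> U" for y
      unfolding \<phi>_def using that Suc.prems(1) by (intro ND) auto
  qed
  also have "\<dots> = Lie (stratonovich_drift f l) (Lie_iter k (stratonovich_drift f l) h) x"
  proof (rule Lie_cong_open[OF smooth_differentiable[OF \<open>smooth \<phi>\<close>] assms(4) \<open>x \<in> U\<close>])
    show "\<phi> y = Lie_iter k (stratonovich_drift f l) h y" if "y \<in> U" for y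
      unfolding \<phi>_def using that Suc.prems(1) by (intro Suc.IH) auto
  qed
  also have "\<dots> = Lie_iter (Suc k) (stratonovich_drift f l) h x" by (simp add: Lie_iter_def)
  finally show ?case .
qed

theorem lemma1:
  fixes f g l :: "'a::euclidean_space \<Rightarrow> 'a" and h :: "'a \<Rightarrow> real" and xbar :: 'a and r :: nat
  assumes "smooth f" and "smooth g" and "smooth l" and "smooth h"
    and "stoch_rel_deg f g l h r xbar"
  shows "\<forall>\<^sub>F x in nhds xbar. \<forall>k. k \<le> r - 1 \<longrightarrow> (\<forall>\<xi>.
           Siter k f l h \<xi> x
             = Lie_iter k (\<lambda>y. f y - (1/2) *\<^sub>R frechet_derivative l (at y) (l y)) h x)"
proof -
  have "\<forall>\<^sub>F x in nhds xbar. \<forall>k. k + 2 \<le> r \<longrightarrow> Lie l (\<lambda>y. Siter k f l h 0 y) x = 0"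
    using assms(5) unfolding stoch_rel_deg_def by blast
  then obtain U where "open U" "xbar \<in> U"
    and ND: "\<And>y k. y \<in> U \<Longrightarrow> k + 2 \<le> r \<Longrightarrow> Lie l (\<lambda>z. Siter k f l h 0 z) y = 0"
    unfolding eventually_nhds by blast
  have drift: "(\<lambda>y. f y - (1/2) *\<^sub>R frechet_derivative l (at y) (l y)) = stratonovich_drift f l"
    by (simp add: fun_eq_iff stratonovich_drift_def)
  show ?thesis
    unfolding eventually_nhds drift
  proof (intro exI[of _ U] conjI ballI allI impI)
    show "Siter k f l h \<xi> x = Lie_iter k (stratonovich_drift f l) h x"
      if "x \<in> U" "k \<le> r - 1" for x k \<xi>
      using Siter_eq_Lie_iter_stratonovich_drift[OF assms(1,3,4) \<open>open U\<close> ND] that by blast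
  qed fact+
qed

end
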